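(* Let $G$ be a countable group acting weakly mixingly (and preserving the probability measure) on a standard probability space $(X,\mu)$, with action written $x \mapsto g\cdot x$. Let $\mathcal{G}$ be a Polish group admitting a bi-invariant complete metric $d$, and let $K \subset \mathcal{G}$ be a closed subgroup. Suppose that $\gamma : G \times X \rightarrow K$ is a $1$-cocycle, that $v : X \rightarrow \mathcal{G}$ is a measurable map and that $\theta : G \rightarrow \mathcal{G}$ is a group homomorphism such that $$\gamma(g,x) = v(g \cdot x)\, \theta(g)\, v(x)^{-1}$$ for almost every $x \in X$ and every $g\in G$. Then, whenever $v_0 \in \mathcal{G}$ is an essential value of the function $v$, we have $v(x)v_0^{-1} \in K$ for almost every $x \in X$ and $v_0\theta(g)v_0^{-1} \in K$ for all $g \in G$. *)

theory Defs
  imports "HOL-Probability.Probability" "HOL-Algebra.Group"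
begin

definition mp_action :: "('g, 'b) monoid_scheme \<Rightarrow> 'x measure \<Rightarrow> ('g \<Rightarrow> 'x \<Rightarrow> 'x) \<Rightarrow> bool" where
  "mp_action G M act \<longleftrightarrow>
     (\<forall>x\<in>space M. act \<one>\<^bsub>G\<^esub> x = x) \<and>
     (\<forall>g\<in>carrier G. \<forall>h\<in>carrier G. \<forall>x\<in>space M. act (g \<otimes>\<^bsub>G\<^esub> h) x = act g (act h x)) \<and>
     (\<forall>g\<in>carrier G. act g \<in> measurable M M \<and> distr M M (act g) = M)"

definition ergodic_action :: "('g, 'b) monoid_scheme \<Rightarrow> 'x measure \<Rightarrow> ('g \<Rightarrow> 'x \<Rightarrow> 'x) \<Rightarrow> bool" where
  "ergodic_action G M act \<longleftrightarrow>
     (\<forall>A\<in>sets M. (\<forall>g\<in>carrier G. act g -` A \<inter> space M = A) \<longrightarrow>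
        emeasure M A = 0 \<or> emeasure M A = emeasure M (space M))"

definition weakly_mixing_action :: "('g, 'b) monoid_scheme \<Rightarrow> 'x measure \<Rightarrow> ('g \<Rightarrow> 'x \<Rightarrow> 'x) \<Rightarrow> bool" where
  "weakly_mixing_action G M act \<longleftrightarrow>
     mp_action G M act \<and>
     ergodic_action G (M \<Otimes>\<^sub>M M) (\<lambda>g z. (act g (fst z), act g (snd z)))"

definition is_cocycle :: "('g, 'b) monoid_scheme \<Rightarrow> ('h::topological_space, 'c) monoid_scheme \<Rightarrow> 'h set \<Rightarrow> 'x measure
     \<Rightarrow> ('g \<Rightarrow> 'x \<Rightarrow> 'x) \<Rightarrow> ('g \<Rightarrow> 'x \<Rightarrow> 'h) \<Rightarrow> bool" where
  "is_cocycle G H K M act \<gamma> \<longleftrightarrow>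
     (\<forall>g\<in>carrier G. \<gamma> g \<in> borel_measurable M \<and> (\<forall>x\<in>space M. \<gamma> g x \<in> K)) \<and>
     (\<forall>g\<in>carrier G. \<forall>h\<in>carrier G.
        AE x in M. \<gamma> (g \<otimes>\<^bsub>G\<^esub> h) x = \<gamma> g (act h x) \<otimes>\<^bsub>H\<^esub> \<gamma> h x)"

definition bi_invariant_metric :: "('h::metric_space, 'c) monoid_scheme \<Rightarrow> bool" where
  "bi_invariant_metric H \<longleftrightarrow>
     (\<forall>a x y. dist (a \<otimes>\<^bsub>H\<^esub> x) (a \<otimes>\<^bsub>H\<^esub> y) = dist x y \<and>
              dist (x \<otimes>\<^bsub>H\<^esub> a) (y \<otimes>\<^bsub>H\<^esub> a) = dist x y)"

definition essential_value :: "'x measure \<Rightarrow> ('x \<Rightarrow> 'h::topological_space) \<Rightarrow> 'h \<Rightarrow> bool" where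
  "essential_value M v v0 \<longleftrightarrow>
     (\<forall>U. open U \<and> v0 \<in> U \<longrightarrow> emeasure M (v -` U \<inter> space M) > 0)"

end

theory Submission
  imports Defs
begin

text \<open>
  Put w(x, y) = v(x) v(y)^-1. The cohomology equation gives
  w(x, y) = gamma(g, x)^-1 w(g x, g y) gamma(g, y) almost everywhere, so, gamma taking values in K
  and the metric being bi-invariant, the distance from w to K is almost invariant under the diagonal
  action on X x X, which is ergodic by weak mixing. Hence for r > 0 the set where this distance is at
  least r is null or conull. It is not conull: it misses C x C, where C is the set of points at which
  v is within r/2 of v0, and C has positive measure because v0 is an essential value. So w lies in the
  closed subgroup K almost everywhere. By Fubini, for almost every x the value v(y) lies in the
  closed set of h with v(x) h^-1 in K for almost every y, hence so does the essential value v0.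
  Finally v0 theta(g) v0^-1 = (v(g x) v0^-1)^-1 gamma(g, x) (v(x) v0^-1) at a suitable point x.

  Only the values of gamma are used: neither the cocycle identity, nor that theta is a homomorphism,
  nor that X is standard enters the argument.
\<close>

locale bi_invariant_group = group H
  for H :: "('h::metric_space, 'c) monoid_scheme" (structure) +
  assumes carrier_eq_UNIV [simp]: "carrier H = UNIV"
    and bi_invariant: "bi_invariant_metric H"
begin

lemma inv_mult_cancel_left [simp]: "inv x \<otimes> (x \<otimes> y) = y"
  by (simp add: m_assoc[symmetric])

lemma mult_inv_cancel_left [simp]: "x \<otimes> (inv x \<otimes> y) = y"
  by (simp add: m_assoc[symmetric])

lemma dist_mult_left [simp]: "dist (a \<otimes> x) (a \<otimes> y) = dist x y"
  using bi_invariant unfolding bi_invariant_metric_def by blast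

lemma dist_mult_right [simp]: "dist (x \<otimes> a) (y \<otimes> a) = dist x y"
  using bi_invariant unfolding bi_invariant_metric_def by blast

lemma dist_inv [simp]: "dist (inv x) (inv y) = dist x y"
proof -
  have "dist (inv x) (inv y) = dist (x \<otimes> inv x \<otimes> y) (x \<otimes> inv y \<otimes> y)"
    by (simp only: dist_mult_left dist_mult_right)
  also have "\<dots> = dist y x"
    by (simp add: m_assoc)
  finally show ?thesis
    by (simp add: dist_commute)
qed

lemma dist_div_one: "dist (a \<otimes> inv b) \<one> = dist a b"
proof -
  have "dist (a \<otimes> inv b) \<one> = dist (a \<otimes> inv b \<otimes> b) (\<one> \<otimes> b)"
    by (simp only: dist_mult_right)
  then show ?thesis
    by (simp add: m_assoc)
qed

lemma dist_mult_le: "dist (x \<otimes> y) (x' \<otimes> y') \<le> dist x x' + dist y y'"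
  using dist_triangle[of "x \<otimes> y" "x' \<otimes> y'" "x' \<otimes> y"] by simp

lemma lipschitz_on_div: "2-lipschitz_on UNIV (\<lambda>p. fst p \<otimes> inv (snd p))"
proof (rule lipschitz_onI)
  fix p q :: "'h \<times> 'h"
  have "dist (fst p \<otimes> inv snd p) (fst q \<otimes> inv snd q) \<le> dist (fst p) (fst q) + dist (snd p) (snd q)"
    using dist_mult_le[of "fst p" "inv snd p" "fst q" "inv snd q"] by simp
  also have "\<dots> \<le> 2 * dist p q"
    using dist_fst_le[of p q] dist_snd_le[of p q] by simp
  finally show "dist (fst p \<otimes> inv snd p) (fst q \<otimes> inv snd q) \<le> 2 * dist p q" .
qed simp

lemma closed_div_vimage:
  assumes "closed K"
  shows "closed {h. a \<otimes> inv h \<in> K}"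
proof -
  have "1-lipschitz_on UNIV (\<lambda>h. a \<otimes> inv h)"
    by (rule lipschitz_onI) simp_all
  then have "continuous_on UNIV (\<lambda>h. a \<otimes> inv h)"
    by (rule lipschitz_on_continuous_on)
  then show ?thesis
    using closed_vimage[OF assms] by (simp add: vimage_def)
qed

lemma infdist_subgroup_mult_le:
  assumes "subgroup K H" "k \<in> K" "k' \<in> K"
  shows "infdist (k \<otimes> a \<otimes> k') K \<le> infdist a K"
proof -
  have "K \<noteq> {}"
    using subgroup.one_closed[OF assms(1)] by blast
  moreover have "infdist (k \<otimes> a \<otimes> k') K \<le> dist a b" if "b \<in> K" for b
  proof -
    have "k \<otimes> b \<otimes> k' \<in> K"
      using assms that by (simp add: subgroup.m_closed)
    then have "infdist (k \<otimes> a \<otimes> k') K \<le> dist (k \<otimes> a \<otimes> k') (k \<otimes> b \<otimes> k')"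
      by (rule infdist_le)
    then show ?thesis
      by simp
  qed
  ultimately show ?thesis
    unfolding infdist_def[of a] by (simp add: cINF_greatest)
qed

lemma infdist_subgroup_mult:
  assumes "subgroup K H" "k \<in> K" "k' \<in> K"
  shows "infdist (k \<otimes> a \<otimes> k') K = infdist a K"
proof (rule antisym)
  show "infdist (k \<otimes> a \<otimes> k') K \<le> infdist a K"
    using assms by (rule infdist_subgroup_mult_le)
  have "inv k \<otimes> (k \<otimes> a \<otimes> k') \<otimes> inv k' = a"
    by (simp add: m_assoc)
  then show "infdist a K \<le> infdist (k \<otimes> a \<otimes> k') K"
    using infdist_subgroup_mult_le[where k="inv k" and k'="inv k'" and a="k \<otimes> a \<otimes> k'"] assms
    by (simp add: subgroup.m_inv_closed)
qed

lemma div_eq_conj_div: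
  "a \<otimes> inv b = inv (w \<otimes> t \<otimes> inv a) \<otimes> (w \<otimes> inv w') \<otimes> (w' \<otimes> t \<otimes> inv b)"
  by (simp add: m_assoc inv_mult_group)

lemma conj_eq_conj_div:
  "u \<otimes> t \<otimes> inv u = inv (a \<otimes> inv u) \<otimes> (a \<otimes> t \<otimes> inv b) \<otimes> (b \<otimes> inv u)"
  by (simp add: m_assoc inv_mult_group)

end

lemma AE_ex_in_positive_measure:
  assumes "AE x in M. P x" "emeasure M D > 0"
  shows "\<exists>x\<in>D. P x"
proof (rule ccontr)
  assume no_witness: "\<not> (\<exists>x\<in>D. P x)"
  have "AE x in M. x \<notin> D"
    by (rule eventually_mono[OF assms(1)]) (use no_witness in blast)
  moreover have D: "D \<in> sets M"
  proof (rule ccontr)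
    assume "D \<notin> sets M"
    then show False
      using assms(2) by (simp add: emeasure_notin_sets)
  qed
  moreover have "{x \<in> space M. \<not> x \<notin> D} = D"
    using sets.sets_into_space[OF D] by auto
  ultimately have "emeasure M D = 0"
    using AE_iff_measurable[of D M] by simp
  with assms(2) show False
    by simp
qed

lemma essential_value_in_closed:
  assumes "essential_value M v v0" "closed F" "AE x in M. v x \<in> F"
  shows "v0 \<in> F"
proof (rule ccontr)
  assume "v0 \<notin> F"
  then have "emeasure M (v -` (- F) \<inter> space M) > 0"
    using assms(1,2) unfolding essential_value_def by blast
  then obtain x where "x \<in> v -` (- F) \<inter> space M" "v x \<in> F"
    using AE_ex_in_positive_measure[OF assms(3)] by blast
  then show False
    by simp
qed

lemma (in pair_sigma_finite) AE_pair_measure_fst: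
  assumes "AE x in M1. P x"
  shows "AE z in M1 \<Otimes>\<^sub>M M2. P (fst z)"
proof -
  obtain N where N: "{x \<in> space M1. \<not> P x} \<subseteq> N" "emeasure M1 N = 0" "N \<in> sets M1"
    using assms by (rule AE_E)
  show ?thesis
    by (rule AE_I[where N="N \<times> space M2"])
       (use N in \<open>auto simp: space_pair_measure M2.emeasure_pair_measure_Times\<close>)
qed

lemma (in pair_sigma_finite) AE_pair_measure_snd:
  assumes "AE y in M2. P y"
  shows "AE z in M1 \<Otimes>\<^sub>M M2. P (snd z)"
proof -
  obtain N where N: "{y \<in> space M2. \<not> P y} \<subseteq> N" "emeasure M2 N = 0" "N \<in> sets M2"
    using assms by (rule AE_E)
  show ?thesis
    by (rule AE_I[where N="space M1 \<times> N"])
       (use N in \<open>auto simp: space_pair_measure M2.emeasure_pair_measure_Times\<close>)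
qed

lemma mp_action_pair:
  assumes "mp_action G M a" "mp_action G N b" "sigma_finite_measure N"
  shows "mp_action G (M \<Otimes>\<^sub>M N) (\<lambda>g z. (a g (fst z), b g (snd z)))"
proof -
  have "distr (M \<Otimes>\<^sub>M N) (M \<Otimes>\<^sub>M N) (\<lambda>z. (a g (fst z), b g (snd z))) = M \<Otimes>\<^sub>M N"
    if g: "g \<in> carrier G" for g
  proof -
    have a: "a g \<in> M \<rightarrow>\<^sub>M M" "distr M M (a g) = M"
      and b: "b g \<in> N \<rightarrow>\<^sub>M N" "distr N N (b g) = N"
      using assms(1,2) g unfolding mp_action_def by auto
    have "distr M M (a g) \<Otimes>\<^sub>M distr N N (b g)
        = distr (M \<Otimes>\<^sub>M N) (M \<Otimes>\<^sub>M N) (\<lambda>(x, y). (a g x, b g y))"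
      using assms(3) by (intro pair_measure_distr a(1) b(1)) (simp add: b(2))
    then show ?thesis
      by (simp add: a(2) b(2) case_prod_beta')
  qed
  moreover have "(\<lambda>z. (a g (fst z), b g (snd z))) \<in> M \<Otimes>\<^sub>M N \<rightarrow>\<^sub>M M \<Otimes>\<^sub>M N"
    if "g \<in> carrier G" for g
  proof -
    have "a g \<in> M \<rightarrow>\<^sub>M M" "b g \<in> N \<rightarrow>\<^sub>M N"
      using assms(1,2) that unfolding mp_action_def by auto
    then show ?thesis
      by (intro measurable_Pair measurable_compose[OF measurable_fst] measurable_compose[OF measurable_snd])
  qed
  ultimately show ?thesis
    using assms(1,2) unfolding mp_action_def by (auto simp: space_pair_measure)
qed

definition invariant_core :: "('g, 'b) monoid_scheme \<Rightarrow> 'x measure \<Rightarrow> ('g \<Rightarrow> 'x \<Rightarrow> 'x) \<Rightarrow> 'x set \<Rightarrow> 'x set"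
  where "invariant_core G N T B = {z \<in> space N. \<forall>g\<in>carrier G. T g z \<in> B}"

lemma invariant_core_subset:
  assumes "group G" "mp_action G N T"
  shows "invariant_core G N T B \<subseteq> B"
proof
  fix z assume "z \<in> invariant_core G N T B"
  then have "z \<in> space N" "T \<one>\<^bsub>G\<^esub> z \<in> B"
    unfolding invariant_core_def using group.is_monoid[OF assms(1)] monoid.one_closed by blast+
  with assms(2) show "z \<in> B"
    unfolding mp_action_def by simp
qed

lemma sets_invariant_core:
  assumes "group G" "countable (carrier G)" "mp_action G N T" "B \<in> sets N"
  shows "invariant_core G N T B \<in> sets N"
proof -
  interpret G: group G by fact
  have T_meas: "\<And>g. g \<in> carrier G \<Longrightarrow> T g \<in> N \<rightarrow>\<^sub>M N"
    using assms(3) unfolding mp_action_def by blast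
  have "invariant_core G N T B = (\<Inter>g\<in>carrier G. T g -` B \<inter> space N)"
    unfolding invariant_core_def using G.one_closed by auto
  then show ?thesis
    using assms(2) G.one_closed
    by (simp only:) (intro sets.countable_INT', auto intro!: measurable_sets[OF T_meas assms(4)])
qed

lemma vimage_invariant_core:
  assumes "group G" "mp_action G N T" "h \<in> carrier G"
  shows "T h -` invariant_core G N T B \<inter> space N = invariant_core G N T B"
proof -
  interpret G: group G by fact
  have T_mult: "\<forall>g\<in>carrier G. \<forall>h\<in>carrier G. \<forall>z\<in>space N. T (g \<otimes>\<^bsub>G\<^esub> h) z = T g (T h z)"
    and T_meas: "T h \<in> N \<rightarrow>\<^sub>M N"
    using assms(2,3) unfolding mp_action_def by auto
  have "T h z \<in> invariant_core G N T B \<longleftrightarrow> z \<in> invariant_core G N T B"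
    if z: "z \<in> space N" for z
  proof -
    have "(\<forall>g\<in>carrier G. T g (T h z) \<in> B) \<longleftrightarrow> (\<forall>g\<in>carrier G. T g z \<in> B)"
    proof (intro iffI ballI)
      fix g assume all: "\<forall>g\<in>carrier G. T g (T h z) \<in> B" and g: "g \<in> carrier G"
      have "T (g \<otimes>\<^bsub>G\<^esub> inv\<^bsub>G\<^esub> h) (T h z) = T (g \<otimes>\<^bsub>G\<^esub> inv\<^bsub>G\<^esub> h \<otimes>\<^bsub>G\<^esub> h) z"
        using T_mult g z assms(3) by simp
      also have "\<dots> = T g z"
        using g assms(3) by (simp add: G.m_assoc)
      finally show "T g z \<in> B"
        using all g assms(3) by (metis G.inv_closed G.m_closed)
    next
      fix g assume all: "\<forall>g\<in>carrier G. T g z \<in> B" and g: "g \<in> carrier G"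
      have "T g (T h z) = T (g \<otimes>\<^bsub>G\<^esub> h) z"
        using T_mult g z assms(3) by simp
      then show "T g (T h z) \<in> B"
        using all g assms(3) by simp
    qed
    then show ?thesis
      unfolding invariant_core_def using measurable_space[OF T_meas z] z by simp
  qed
  moreover have "invariant_core G N T B \<subseteq> space N"
    unfolding invariant_core_def by blast
  ultimately show ?thesis
    by blast
qed

lemma ergodic_action_almost_invariant:
  assumes "group G" "countable (carrier G)" "finite_measure N"
    and "mp_action G N T" "ergodic_action G N T"
    and B: "B \<in> sets N" "\<forall>g\<in>carrier G. AE z in N. z \<in> B \<longrightarrow> T g z \<in> B"
  shows "(AE z in N. z \<notin> B) \<or> (AE z in N. z \<in> B)"
proof -
  interpret finite_measure N by fact
  define A where "A = invariant_core G N T B"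
  have A: "A \<in> sets N"
    unfolding A_def using assms(1,2,4) B(1) by (rule sets_invariant_core)
  have "\<forall>h\<in>carrier G. T h -` A \<inter> space N = A"
    unfolding A_def using vimage_invariant_core[OF assms(1,4)] by blast
  then have "emeasure N A = 0 \<or> emeasure N A = emeasure N (space N)"
    using assms(5) A unfolding ergodic_action_def by blast
  moreover have "AE z in N. z \<in> B \<longrightarrow> z \<in> A"
  proof -
    have "AE z in N. \<forall>g\<in>carrier G. z \<in> B \<longrightarrow> T g z \<in> B"
      using B(2) by (subst AE_ball_countable[OF assms(2)])
    with AE_space show ?thesis
      by eventually_elim (auto simp: A_def invariant_core_def)
  qed
  moreover have "A \<subseteq> B"
    unfolding A_def using assms(1,4) by (rule invariant_core_subset)
  ultimately show ?thesis
  proof (elim disjE)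
    assume "emeasure N A = 0"
    then have "AE z in N. z \<notin> A"
      by (intro AE_not_in) (simp add: A null_setsI)
    with \<open>AE z in N. z \<in> B \<longrightarrow> z \<in> A\<close> have "AE z in N. z \<notin> B"
      by eventually_elim blast
    then show ?thesis ..
  next
    assume "emeasure N A = emeasure N (space N)"
    then have "emeasure N (space N - A) = 0"
      by (simp add: emeasure_compl[OF A])
    then have "AE z in N. z \<in> A"
      using AE_iff_measurable[OF _ refl, of N "\<lambda>z. z \<in> A"] A
      by (simp add: set_diff_eq sets.compl_sets Collect_conj_eq)
    then have "AE z in N. z \<in> B"
      by (rule eventually_mono) (use \<open>A \<subseteq> B\<close> in blast)
    then show ?thesis ..
  qed
qed

locale cohomologous_cocycle =
  G: group G + H: bi_invariant_group H + prob_space M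
  for G :: "('g, 'b) monoid_scheme"
    and H :: "('h::{metric_space, second_countable_topology}, 'c) monoid_scheme"
    and M :: "'x measure" +
  fixes act :: "'g \<Rightarrow> 'x \<Rightarrow> 'x"
    and \<gamma> :: "'g \<Rightarrow> 'x \<Rightarrow> 'h"
    and v :: "'x \<Rightarrow> 'h"
    and \<theta> :: "'g \<Rightarrow> 'h"
    and K :: "'h set"
  assumes countable_carrier: "countable (carrier G)"
    and weakly_mixing: "weakly_mixing_action G M act"
    and subgroup_K: "subgroup K H"
    and closed_K: "closed K"
    and cocycle_in_K: "g \<in> carrier G \<Longrightarrow> x \<in> space M \<Longrightarrow> \<gamma> g x \<in> K"
    and measurable_v: "v \<in> borel_measurable M"
    and cohomologous: "g \<in> carrier G \<Longrightarrow>
      AE x in M. \<gamma> g x = v (act g x) \<otimes>\<^bsub>H\<^esub> \<theta> g \<otimes>\<^bsub>H\<^esub> inv\<^bsub>H\<^esub> v x"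
begin

abbreviation diag :: "'g \<Rightarrow> 'x \<times> 'x \<Rightarrow> 'x \<times> 'x" where
  "diag g z \<equiv> (act g (fst z), act g (snd z))"

definition vdiv :: "'x \<times> 'x \<Rightarrow> 'h" where
  "vdiv z = v (fst z) \<otimes>\<^bsub>H\<^esub> inv\<^bsub>H\<^esub> v (snd z)"

lemma mp_action_act: "mp_action G M act"
  using weakly_mixing unfolding weakly_mixing_action_def by blast

lemma mp_action_diag: "mp_action G (M \<Otimes>\<^sub>M M) diag"
  using mp_action_pair[OF mp_action_act mp_action_act] sigma_finite_measure_axioms by blast

lemma ergodic_action_diag: "ergodic_action G (M \<Otimes>\<^sub>M M) diag"
  using weakly_mixing unfolding weakly_mixing_action_def by blast

lemma measurable_vdiv: "vdiv \<in> borel_measurable (M \<Otimes>\<^sub>M M)"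
  unfolding vdiv_def
  using borel_measurable_continuous_Pair[where H="\<lambda>a b. a \<otimes>\<^bsub>H\<^esub> inv\<^bsub>H\<^esub> b",
      OF measurable_compose[OF measurable_fst measurable_v] measurable_compose[OF measurable_snd measurable_v]
      lipschitz_on_continuous_on[OF H.lipschitz_on_div]]
  by simp

lemma vdiv_diag:
  assumes "g \<in> carrier G"
  shows "AE z in M \<Otimes>\<^sub>M M. vdiv z = inv\<^bsub>H\<^esub> \<gamma> g (fst z) \<otimes>\<^bsub>H\<^esub> vdiv (diag g z) \<otimes>\<^bsub>H\<^esub> \<gamma> g (snd z)"
proof -
  interpret pair_sigma_finite M M
    by unfold_locales
  from AE_pair_measure_fst[OF cohomologous[OF assms]] AE_pair_measure_snd[OF cohomologous[OF assms]]
  show ?thesis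
    by eventually_elim (simp add: vdiv_def H.div_eq_conj_div)
qed

lemma infdist_vdiv_diag:
  assumes "g \<in> carrier G"
  shows "AE z in M \<Otimes>\<^sub>M M. infdist (vdiv (diag g z)) K = infdist (vdiv z) K"
  using vdiv_diag[OF assms] AE_space
proof eventually_elim
  case (elim z)
  then have "fst z \<in> space M" "snd z \<in> space M"
    by (auto simp: space_pair_measure)
  then have "inv\<^bsub>H\<^esub> \<gamma> g (fst z) \<in> K" "\<gamma> g (snd z) \<in> K"
    using assms subgroup_K by (auto simp: cocycle_in_K subgroup.m_inv_closed)
  then show ?case
    using elim(1) H.infdist_subgroup_mult[OF subgroup_K] by metis
qed

lemma infdist_vdiv_less_AE:
  assumes "essential_value M v v0" "r > 0"
  shows "AE z in M \<Otimes>\<^sub>M M. infdist (vdiv z) K < r"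
proof -
  interpret MM: pair_prob_space M M
    by unfold_locales
  define B where "B = {z \<in> space (M \<Otimes>\<^sub>M M). r \<le> infdist (vdiv z) K}"
  have [measurable]: "(\<lambda>z. infdist (vdiv z) K) \<in> borel_measurable (M \<Otimes>\<^sub>M M)"
    by (rule borel_measurable_continuous_on[OF continuous_on_infdist[OF continuous_on_id] measurable_vdiv])
  have B: "B \<in> sets (M \<Otimes>\<^sub>M M)"
    unfolding B_def by measurable
  have almost_invariant: "\<forall>g\<in>carrier G. AE z in M \<Otimes>\<^sub>M M. z \<in> B \<longrightarrow> diag g z \<in> B"
  proof
    fix g assume g: "g \<in> carrier G"
    have "diag g \<in> M \<Otimes>\<^sub>M M \<rightarrow>\<^sub>M M \<Otimes>\<^sub>M M"
      using mp_action_diag g unfolding mp_action_def by blast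
    then have diag_space: "z \<in> space (M \<Otimes>\<^sub>M M) \<Longrightarrow> diag g z \<in> space (M \<Otimes>\<^sub>M M)" for z
      by (rule measurable_space)
    from infdist_vdiv_diag[OF g] show "AE z in M \<Otimes>\<^sub>M M. z \<in> B \<longrightarrow> diag g z \<in> B"
      by eventually_elim (simp add: B_def diag_space)
  qed
  have "(AE z in M \<Otimes>\<^sub>M M. z \<notin> B) \<or> (AE z in M \<Otimes>\<^sub>M M. z \<in> B)"
    by (rule ergodic_action_almost_invariant[OF G.group_axioms countable_carrier
          MM.P.finite_measure_axioms mp_action_diag ergodic_action_diag B almost_invariant])
  moreover have "\<not> (AE z in M \<Otimes>\<^sub>M M. z \<in> B)"
  proof
    assume "AE z in M \<Otimes>\<^sub>M M. z \<in> B"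
    define C where "C = v -` ball v0 (r / 2) \<inter> space M"
    have "emeasure M C > 0"
      using assms unfolding C_def essential_value_def by simp
    moreover have C_sets: "C \<in> sets M"
      unfolding C_def by (rule measurable_sets[OF measurable_v]) simp
    then have "emeasure (M \<Otimes>\<^sub>M M) (C \<times> C) = emeasure M C * emeasure M C"
      using emeasure_pair_measure_Times[OF C_sets C_sets] by simp
    ultimately have "emeasure (M \<Otimes>\<^sub>M M) (C \<times> C) > 0"
      by (simp add: ennreal_zero_less_mult_iff)
    then obtain z where z: "z \<in> C \<times> C" "z \<in> B"
      using AE_ex_in_positive_measure[OF \<open>AE z in M \<Otimes>\<^sub>M M. z \<in> B\<close>] by blast
    have "infdist (vdiv z) K \<le> dist (vdiv z) \<one>\<^bsub>H\<^esub>"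
      using subgroup.one_closed[OF subgroup_K] by (rule infdist_le)
    also have "\<dots> = dist (v (fst z)) (v (snd z))"
      unfolding vdiv_def by (rule H.dist_div_one)
    also have "\<dots> \<le> dist (v (fst z)) v0 + dist v0 (v (snd z))"
      by (rule dist_triangle)
    also have "\<dots> < r"
      using z(1) unfolding C_def by (auto simp: dist_commute)
    finally show False
      using z(2) unfolding B_def by simp
  qed
  ultimately have "AE z in M \<Otimes>\<^sub>M M. z \<notin> B"
    by blast
  with AE_space show ?thesis
    by eventually_elim (auto simp: B_def)
qed

lemma vdiv_in_subgroup_AE:
  assumes "essential_value M v v0"
  shows "AE z in M \<Otimes>\<^sub>M M. vdiv z \<in> K"
proof -
  have "AE z in M \<Otimes>\<^sub>M M. \<forall>n::nat. infdist (vdiv z) K < 1 / Suc n"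
    using infdist_vdiv_less_AE[OF assms] by (simp add: AE_all_countable)
  then show ?thesis
  proof (rule eventually_mono)
    fix z assume less: "\<forall>n::nat. infdist (vdiv z) K < 1 / Suc n"
    have "infdist (vdiv z) K \<le> 0"
    proof (rule ccontr)
      assume "\<not> infdist (vdiv z) K \<le> 0"
      then obtain n where "1 / Suc n < infdist (vdiv z) K"
        by (metis nat_approx_posE not_le)
      with less show False
        by (meson less_asym)
    qed
    then have "infdist (vdiv z) K = 0"
      by (simp add: antisym infdist_nonneg)
    moreover have "K \<noteq> {}"
      using subgroup.one_closed[OF subgroup_K] by blast
    ultimately show "vdiv z \<in> K"
      using in_closure_iff_infdist_zero closed_K closure_closed by blast
  qed
qed

lemma div_essential_value_in_subgroup_AE:
  assumes "essential_value M v v0"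
  shows "AE x in M. v x \<otimes>\<^bsub>H\<^esub> inv\<^bsub>H\<^esub> v0 \<in> K"
proof -
  interpret pair_sigma_finite M M
    by unfold_locales
  have "AE x in M. AE y in M. v y \<in> {h. v x \<otimes>\<^bsub>H\<^esub> inv\<^bsub>H\<^esub> h \<in> K}"
    using AE_pair[OF vdiv_in_subgroup_AE[OF assms]] by (simp only: vdiv_def fst_conv snd_conv mem_Collect_eq)
  then show ?thesis
  proof (rule eventually_mono)
    fix x assume "AE y in M. v y \<in> {h. v x \<otimes>\<^bsub>H\<^esub> inv\<^bsub>H\<^esub> h \<in> K}"
    then show "v x \<otimes>\<^bsub>H\<^esub> inv\<^bsub>H\<^esub> v0 \<in> K"
      using essential_value_in_closed[OF assms H.closed_div_vimage[OF closed_K]] by blast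
  qed
qed

lemma conj_essential_value_in_subgroup:
  assumes "essential_value M v v0" "g \<in> carrier G"
  shows "v0 \<otimes>\<^bsub>H\<^esub> \<theta> g \<otimes>\<^bsub>H\<^esub> inv\<^bsub>H\<^esub> v0 \<in> K"
proof -
  have act_g: "act g \<in> M \<rightarrow>\<^sub>M M" "distr M M (act g) = M"
    using mp_action_act assms(2) unfolding mp_action_def by auto
  have "AE x in distr M M (act g). v x \<otimes>\<^bsub>H\<^esub> inv\<^bsub>H\<^esub> v0 \<in> K"
    unfolding act_g(2) by (rule div_essential_value_in_subgroup_AE[OF assms(1)])
  then have "AE x in M. v (act g x) \<otimes>\<^bsub>H\<^esub> inv\<^bsub>H\<^esub> v0 \<in> K"
    by (rule AE_distrD[OF act_g(1)])
  with div_essential_value_in_subgroup_AE[OF assms(1)] cohomologous[OF assms(2)] AE_space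
  have "AE x in M. v0 \<otimes>\<^bsub>H\<^esub> \<theta> g \<otimes>\<^bsub>H\<^esub> inv\<^bsub>H\<^esub> v0 \<in> K"
  proof eventually_elim
    case (elim x)
    then have "\<gamma> g x \<in> K"
      using cocycle_in_K[OF assms(2)] by blast
    with elim show ?case
      using H.conj_eq_conj_div[of v0 "\<theta> g" "v (act g x)" "v x"] subgroup_K
      by (metis subgroup.m_closed subgroup.m_inv_closed)
  qed
  from AE_ex_in_positive_measure[OF this, of "space M"] show ?thesis
    by (simp add: emeasure_space_1)
qed

end

theorem lemma4p8:
  fixes G :: "('g, 'b) monoid_scheme"
    and M :: "'x::polish_space measure"
    and H :: "('h::polish_space, 'c) monoid_scheme"
    and act :: "'g \<Rightarrow> 'x \<Rightarrow> 'x"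
    and \<gamma> :: "'g \<Rightarrow> 'x \<Rightarrow> 'h"
    and v :: "'x \<Rightarrow> 'h"
    and \<theta> :: "'g \<Rightarrow> 'h"
    and K :: "'h set"
    and v0 :: 'h
  assumes "group G" and "countable (carrier G)"
    and "sets M = sets borel" and "prob_space M"
    and "weakly_mixing_action G M act"
    and "group H" and "carrier H = UNIV" and "bi_invariant_metric H"
    and "subgroup K H" and "closed K"
    and "is_cocycle G H K M act \<gamma>"
    and "v \<in> borel_measurable M"
    and "\<theta> \<in> hom G H"
    and "\<forall>g\<in>carrier G. AE x in M. \<gamma> g x = v (act g x) \<otimes>\<^bsub>H\<^esub> \<theta> g \<otimes>\<^bsub>H\<^esub> inv\<^bsub>H\<^esub> (v x)"
    and "essential_value M v v0"
  shows "(AE x in M. v x \<otimes>\<^bsub>H\<^esub> inv\<^bsub>H\<^esub> v0 \<in> K) \<and>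
         (\<forall>g\<in>carrier G. v0 \<otimes>\<^bsub>H\<^esub> \<theta> g \<otimes>\<^bsub>H\<^esub> inv\<^bsub>H\<^esub> v0 \<in> K)"
proof -
  interpret cohomologous_cocycle G H M act \<gamma> v \<theta> K
    using assms unfolding is_cocycle_def
    by (intro cohomologous_cocycle.intro bi_invariant_group.intro bi_invariant_group_axioms.intro
          cohomologous_cocycle_axioms.intro prob_space.axioms) auto
  show ?thesis
    using div_essential_value_in_subgroup_AE conj_essential_value_in_subgroup assms(15) by blast
qed

end
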